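(* Let $d\ge1$, $N\ge1$, $T>0$, let $a\ne0$ be real, and let $U:\mathbb{R}^d\to\mathbb{R}^d$, $U(z)=az$. Let $\mathcal{K}:\mathbb{R}^d\to\mathbb{R}^d$ be Lipschitz continuous, and define $\hat K(z)=\mathcal{K}(z/a)$ and $\tilde K(z)=\frac1a\mathcal{K}(z)$. Assume $v_\textup{d}\equiv0$ and let $\hat v[\mu](x)=-\int\hat K(y-x)\,d\mu(y)$, $\tilde v[\mu](x)=-\int\tilde K(y-x)\,d\mu(y)$. (i) For every $\mu\in\mathcal{M}^N_1(\mathbb{R}^d)$ and $x\in\mathbb{R}^d$, $\tilde v[\mu](x)=\frac1a\hat v[U\#\mu](ax)$. Let $\hat\mu_\cdot,\tilde\mu_\cdot\in C([0,T];\mathcal{M}^N_1(\mathbb{R}^d))$ be the solutions of the Cauchy problem with velocities $\hat v$ and $\tilde v$ respectively, with initial data satisfying $\hat\mu_0=U\#\tilde\mu_0$, and let $\hat\gamma_t,\tilde\gamma_t$ be their flow maps. Then: (ii) $\hat\gamma_t=U\circ\tilde\gamma_t\circ U^{-1}$ for all $t\in(0,T]$; (iii) $\hat\mu_t=U\#\tilde\mu_t$ for all $t\in(0,T]$.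
   Context: $\mathcal{M}^N_1(\mathbb{R}^d)$ is the set of positive Borel measures on $\mathbb{R}^d$ with total mass $N$ and finite first moment; $\#$ denotes push-forward. For a velocity field $\mu\mapsto v[\mu]$, a solution of the Cauchy problem $\partial_t\mu_t+\nabla\cdot(\mu_tv[\mu_t])=0$, $\mu_0=\bar\mu$, on $[0,T]$ is a curve $\mu_\cdot\in C([0,T];\mathcal{M}^N_1(\mathbb{R}^d))$ given by $\mu_t=\gamma_t\#\bar\mu$, where the flow map satisfies $\gamma_t(x)=x+\int_0^tv[\mu_s](\gamma_s(x))\,ds$. *)

theory Defs
  imports "HOL-Analysis.Analysis" "HOL-Probability.Probability"
begin

definition M1N :: "real \<Rightarrow> ('a::euclidean_space) measure set" where
  "M1N N = {\<mu>. sets \<mu> = sets borel \<and> emeasure \<mu> UNIV = ennreal N \<and> integrable \<mu> norm}"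

definition pushfwd :: "('a::euclidean_space \<Rightarrow> 'a) \<Rightarrow> 'a measure \<Rightarrow> 'a measure" where
  "pushfwd f \<mu> = distr \<mu> borel f"

text \<open>Wasserstein-1 distance (Kantorovich-Rubinstein dual form) between measures of equal mass.\<close>
definition W1 :: "('a::euclidean_space) measure \<Rightarrow> 'a measure \<Rightarrow> real" where
  "W1 \<mu> \<nu> = (SUP f \<in> {f :: 'a \<Rightarrow> real. 1-lipschitz_on UNIV f}.
               (\<integral>y. f y \<partial>\<mu>) - (\<integral>y. f y \<partial>\<nu>))"

definition conv_vel :: "('a::euclidean_space \<Rightarrow> 'a) \<Rightarrow> 'a measure \<Rightarrow> 'a \<Rightarrow> 'a" where
  "conv_vel K \<mu> x = - (\<integral>y. K (y - x) \<partial>\<mu>)"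

definition is_solution ::
  "real \<Rightarrow> real \<Rightarrow> ('a::euclidean_space measure \<Rightarrow> 'a \<Rightarrow> 'a) \<Rightarrow> 'a measure
     \<Rightarrow> (real \<Rightarrow> 'a measure) \<Rightarrow> (real \<Rightarrow> 'a \<Rightarrow> 'a) \<Rightarrow> bool" where
  "is_solution N T v mubar \<mu> \<gamma> \<longleftrightarrow>
     mubar \<in> M1N N \<and>
     (\<forall>t\<in>{0..T}. \<mu> t \<in> M1N N) \<and>
     (\<forall>t\<in>{0..T}. \<forall>\<epsilon>>0. \<exists>\<delta>>0. \<forall>s\<in>{0..T}. \<bar>s - t\<bar> < \<delta> \<longrightarrow> W1 (\<mu> s) (\<mu> t) < \<epsilon>) \<and>
     (\<forall>t\<in>{0..T}. \<gamma> t \<in> borel_measurable borel) \<and>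
     (\<forall>t\<in>{0..T}. \<mu> t = pushfwd (\<gamma> t) mubar) \<and>
     (\<forall>t\<in>{0..T}. \<forall>x. ((\<lambda>s. v (\<mu> s) (\<gamma> s x)) has_integral (\<gamma> t x - x)) {0..t})"

end

theory Submission
  imports Defs
begin

text \<open>The substitution \<open>y \<mapsto> a y\<close> in the interaction integral gives
  \<open>conv_vel Ktil \<mu> x = a\<^sup>-\<^sup>1 conv_vel Khat (U # \<mu>) (a x)\<close>. Hence \<open>gammahat t \<circ> U\<close> and
  \<open>U \<circ> gammatil t\<close> solve one and the same Lagrangian equation: kernel \<open>Khat\<close>, reference measure
  \<open>mutil 0\<close>, initial map \<open>U\<close>. Such flows are unique. On a time interval of length \<open>h\<close> the pointwise
  distance of two flows is at most \<open>2 C h A\<close>, where \<open>A\<close> is the supremum over the interval of their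
  \<open>L\<^sup>1\<close>-distance; integrating gives \<open>A \<le> A/2\<close> as soon as \<open>h C N \<le> 1/4\<close>, and finitely many
  such steps cover \<open>[0,T]\<close>. The supremum is finite because \<open>W\<^sub>1\<close>-continuity of the curves makes
  their first moments continuous in time.\<close>

section \<open>Lipschitz maps and integral equations on intervals\<close>

lemma borel_measurable_lipschitz:
  fixes f :: "'a::real_normed_vector \<Rightarrow> 'b::real_normed_vector"
  shows "C-lipschitz_on UNIV f \<Longrightarrow> f \<in> borel_measurable borel"
  using lipschitz_on_continuous_on borel_measurable_continuous_onI by blast

lemma lipschitz_on_rescale:
  fixes K :: "'a::real_normed_vector \<Rightarrow> 'b::real_normed_vector"
  assumes K: "C-lipschitz_on UNIV K" and a: "a \<noteq> 0"
  shows "(C / \<bar>a\<bar>)-lipschitz_on UNIV (\<lambda>z. K (z /\<^sub>R a))"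
proof (rule lipschitz_onI)
  fix x y :: 'a
  have "dist (K (x /\<^sub>R a)) (K (y /\<^sub>R a)) \<le> C * dist (x /\<^sub>R a) (y /\<^sub>R a)"
    using lipschitz_onD[OF K] by simp
  also have "dist (x /\<^sub>R a) (y /\<^sub>R a) = dist x y / \<bar>a\<bar>"
    by (simp add: dist_norm scaleR_diff_right[symmetric] divide_inverse_commute)
  finally show "dist (K (x /\<^sub>R a)) (K (y /\<^sub>R a)) \<le> C / \<bar>a\<bar> * dist x y" by simp
  show "0 \<le> C / \<bar>a\<bar>" using lipschitz_on_nonneg[OF K] by simp
qed

lemma (in finite_measure) integrable_lipschitz_comp:
  fixes K :: "'b::euclidean_space \<Rightarrow> 'c::euclidean_space"
  assumes K: "C-lipschitz_on UNIV K" and f: "integrable M f"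
  shows "integrable M (\<lambda>z. K (f z))"
proof (rule Bochner_Integration.integrable_bound)
  show "integrable M (\<lambda>z. norm (K 0) + C * norm (f z))"
    using f by auto
  show "(\<lambda>z. K (f z)) \<in> borel_measurable M"
    using measurable_compose[OF borel_measurable_integrable[OF f] borel_measurable_lipschitz[OF K]] .
  have "norm (K y) \<le> norm (K 0) + C * norm y" for y
    using norm_triangle_sub[of "K y" "K 0"] lipschitz_on_normD[OF K, where x=y and y=0] by simp
  then show "AE z in M. norm (K (f z)) \<le> norm (norm (K 0) + C * norm (f z))"
    using lipschitz_on_nonneg[OF K] by (auto intro: order_trans[OF _ abs_ge_self])
qed

lemma pushfwd_pushfwd_commute:
  assumes sets: "sets \<mu> = sets borel" and g: "g \<in> borel_measurable borel"
    and h: "h \<in> borel_measurable borel" and U: "U \<in> borel_measurable borel"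
    and comm: "g \<circ> U = U \<circ> h"
  shows "pushfwd g (pushfwd U \<mu>) = pushfwd U (pushfwd h \<mu>)"
proof -
  have "U \<in> borel_measurable \<mu>" "h \<in> borel_measurable \<mu>"
    using U h unfolding measurable_cong_sets[OF sets refl] by auto
  then show ?thesis
    unfolding pushfwd_def using g U by (simp add: distr_distr comm)
qed

lemma has_integral_increment:
  fixes f :: "real \<Rightarrow> 'b::banach"
  assumes F: "\<And>t. t \<in> {a..b} \<Longrightarrow> (f has_integral (g t - c)) {a..t}"
    and "a \<le> s" "s \<le> t" "t \<le> b"
  shows "(f has_integral (g t - g s)) {s..t}"
proof -
  have s: "s \<in> {a..b}" and t: "t \<in> {a..b}" using assms(2-4) by auto
  have "f integrable_on {a..t}" using F[OF t] by blast
  then have "f integrable_on {s..t}"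
    by (rule integrable_subinterval_real) (use assms(2) in auto)
  then have i: "(f has_integral integral {s..t} f) {s..t}" by blast
  have "(f has_integral (g s - c + integral {s..t} f)) {a..t}"
    by (rule has_integral_combine[OF assms(2,3) F[OF s] i])
  then have "g t - c = g s - c + integral {s..t} f"
    by (rule has_integral_unique[OF F[OF t]])
  then have "integral {s..t} f = g t - g s" by (simp add: algebra_simps)
  then show ?thesis using i by simp
qed

lemma continuous_on_has_integral_increment:
  fixes f :: "real \<Rightarrow> 'b::banach"
  assumes F: "\<And>t. t \<in> {a..b} \<Longrightarrow> (f has_integral (g t - c)) {a..t}"
  shows "continuous_on {a..b} g"
proof (cases "a \<le> b")
  case True
  have "f integrable_on {a..b}" using F[of b] True by auto
  then have "continuous_on {a..b} (\<lambda>t. g a + integral {a..t} f)"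
    by (intro continuous_on_add continuous_on_const indefinite_integral_continuous_1)
  moreover have "g a + integral {a..t} f = g t" if t: "t \<in> {a..b}" for t
  proof -
    have "(f has_integral (g t - g a)) {a..t}"
      using t by (intro has_integral_increment[where c=c and b=b]) (auto intro: F)
    then show ?thesis by (simp add: integral_unique)
  qed
  ultimately show ?thesis by (rule continuous_on_eq)
qed simp

lemma norm_le_if_has_integral_on_short_interval:
  fixes g w :: "real \<Rightarrow> 'b::real_normed_vector"
  assumes g: "continuous_on {t0..t1} g"
    and w: "\<And>t. t \<in> {t0..t1} \<Longrightarrow> (w has_integral g t) {t0..t}"
    and wb: "\<And>r. r \<in> {t0..t1} \<Longrightarrow> norm (w r) \<le> \<alpha> + \<beta> * norm (g r)"
    and \<alpha>: "0 \<le> \<alpha>" and \<beta>: "0 \<le> \<beta>" and short: "(t1 - t0) * \<beta> \<le> 1/4"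
    and t: "t \<in> {t0..t1}"
  shows "norm (g t) \<le> 2 * \<alpha> * (t1 - t0)"
proof -
  obtain s where s: "s \<in> {t0..t1}" and max: "\<And>r. r \<in> {t0..t1} \<Longrightarrow> norm (g r) \<le> norm (g s)"
    using continuous_attains_sup[OF compact_Icc _ continuous_on_norm[OF g]] t by fastforce
  define M where "M = norm (g s)"
  have "M \<le> (\<alpha> + \<beta> * M) * Henstock_Kurzweil_Integration.content {t0..s}"
    unfolding M_def
  proof (rule has_integral_bound_real[OF _ _ w[OF s], where S="{}"])
    fix r assume "r \<in> {t0..s} - {}"
    then have "r \<in> {t0..t1}" using s by auto
    then show "norm (w r) \<le> \<alpha> + \<beta> * norm (g s)"
      using wb[of r] mult_left_mono[OF max \<beta>, of r] by linarith
  qed (use \<alpha> \<beta> in auto)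
  also have "\<dots> \<le> (\<alpha> + \<beta> * M) * (t1 - t0)"
    using s \<alpha> \<beta> by (intro mult_left_mono) (auto simp: M_def)
  also have "\<dots> \<le> \<alpha> * (t1 - t0) + M / 4"
    using short \<beta> mult_right_mono[OF short, of M] by (simp add: M_def algebra_simps)
  finally have "M \<le> \<alpha> * (t1 - t0) + M / 4" .
  moreover have "0 \<le> \<alpha> * (t1 - t0)" using \<alpha> s by simp
  ultimately have "M \<le> 2 * \<alpha> * (t1 - t0)" by linarith
  then show ?thesis using max[OF t] by (simp add: M_def)
qed

lemma continuation_by_steps:
  fixes P :: "real \<Rightarrow> bool"
  assumes h: "h > 0" and P0: "P 0"
    and step: "\<And>t0 t1. 0 \<le> t0 \<Longrightarrow> t0 \<le> t1 \<Longrightarrow> t1 \<le> T \<Longrightarrow> t1 - t0 \<le> h \<Longrightarrow> P t0 \<Longrightarrow> \<forall>s\<in>{t0..t1}. P s"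
  shows "\<forall>t\<in>{0..T}. P t"
proof -
  have "\<forall>t\<in>{0..T}. t \<le> real k * h \<longrightarrow> P t" for k :: nat
  proof (induction k)
    case 0
    then show ?case using P0 by auto
  next
    case (Suc k)
    show ?case
    proof (intro ballI impI)
      fix s assume s: "s \<in> {0..T}" "s \<le> real (Suc k) * h"
      show "P s"
      proof (cases "s \<le> real k * h")
        case True
        then show ?thesis using Suc.IH s by blast
      next
        case False
        define t0 t1 where "t0 = real k * h" and "t1 = min T (real (Suc k) * h)"
        have t0: "0 \<le> t0" "t0 \<le> s" and t1: "s \<le> t1" "t1 \<le> T"
          using False s h unfolding t0_def t1_def by simp_all
        have "t1 - t0 \<le> h" by (simp add: t0_def t1_def algebra_simps)
        moreover have "P t0" using Suc.IH t0 s unfolding t0_def by auto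
        ultimately show ?thesis using step[of t0 t1] t0 t1 by auto
      qed
    qed
  qed
  moreover have "t \<le> real (nat \<lceil>t / h\<rceil>) * h" for t
    using h real_nat_ceiling_ge[of "t / h"] by (simp add: divide_le_eq)
  ultimately show ?thesis by blast
qed

section \<open>Interaction velocity fields\<close>

lemma conv_vel_distr:
  assumes "f \<in> borel_measurable M" "K \<in> borel_measurable borel"
  shows "conv_vel K (distr M borel f) x = - (\<integral>z. K (f z - x) \<partial>M)"
  unfolding conv_vel_def using assms by (subst integral_distr) auto

lemma conv_vel_rescale:
  fixes K :: "'a::euclidean_space \<Rightarrow> 'a"
  assumes sets: "sets \<mu> = sets borel" and a: "a \<noteq> 0" and K: "K \<in> borel_measurable borel"
  shows "conv_vel (\<lambda>z. (1 / a) *\<^sub>R K z) \<mu> x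
    = (1 / a) *\<^sub>R conv_vel (\<lambda>z. K (z /\<^sub>R a)) (pushfwd (\<lambda>z. a *\<^sub>R z) \<mu>) (a *\<^sub>R x)"
proof -
  have "(\<lambda>z. a *\<^sub>R z) \<in> borel_measurable \<mu>"
    unfolding measurable_cong_sets[OF sets refl] by simp
  then have "conv_vel (\<lambda>z. K (z /\<^sub>R a)) (pushfwd (\<lambda>z. a *\<^sub>R z) \<mu>) (a *\<^sub>R x)
      = - (\<integral>y. K ((a *\<^sub>R y - a *\<^sub>R x) /\<^sub>R a) \<partial>\<mu>)"
    unfolding pushfwd_def using K by (intro conv_vel_distr) auto
  also have "(\<lambda>y. K ((a *\<^sub>R y - a *\<^sub>R x) /\<^sub>R a)) = (\<lambda>y. K (y - x))"
    using a by (simp add: scaleR_diff_right[symmetric])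
  finally show ?thesis using a by (simp add: conv_vel_def)
qed

lemma (in finite_measure) norm_conv_vel_distr_diff_le:
  fixes K :: "'b::euclidean_space \<Rightarrow> 'b"
  assumes K: "C-lipschitz_on UNIV K" and f: "integrable M f" and g: "integrable M g"
  shows "norm (conv_vel K (distr M borel f) x - conv_vel K (distr M borel g) y)
    \<le> C * (\<integral>z. norm (f z - g z) \<partial>M) + C * measure M (space M) * norm (x - y)"
proof -
  have C: "C \<ge> 0" using lipschitz_on_nonneg[OF K] .
  have Kf: "integrable M (\<lambda>z. K (f z - x))" and Kg: "integrable M (\<lambda>z. K (g z - y))"
    using integrable_lipschitz_comp[OF K] f g by auto
  have "conv_vel K (distr M borel f) x - conv_vel K (distr M borel g) y
      = (\<integral>z. K (g z - y) - K (f z - x) \<partial>M)"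
    using Kf Kg f g borel_measurable_lipschitz[OF K] by (simp add: conv_vel_distr)
  also have "norm \<dots> \<le> (\<integral>z. norm (K (g z - y) - K (f z - x)) \<partial>M)"
    by (rule integral_norm_bound)
  also have "\<dots> \<le> (\<integral>z. C * norm (f z - g z) + C * norm (x - y) \<partial>M)"
  proof (rule integral_mono)
    show "integrable M (\<lambda>z. norm (K (g z - y) - K (f z - x)))" using Kf Kg by auto
    show "integrable M (\<lambda>z. C * norm (f z - g z) + C * norm (x - y))" using f g by auto
    fix z
    have "norm ((g z - y) - (f z - x)) \<le> norm (f z - g z) + norm (x - y)"
      using norm_triangle_ineq[of "f z - g z" "y - x"] by (simp add: norm_minus_commute algebra_simps)
    then have "C * norm ((g z - y) - (f z - x)) \<le> C * (norm (f z - g z) + norm (x - y))"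
      using C by (rule mult_left_mono)
    then show "norm (K (g z - y) - K (f z - x)) \<le> C * norm (f z - g z) + C * norm (x - y)"
      using lipschitz_on_normD[OF K, where x="g z - y" and y="f z - x"]
      by (simp add: distrib_left)
  qed
  also have "\<dots> = C * (\<integral>z. norm (f z - g z) \<partial>M) + C * measure M (space M) * norm (x - y)"
    using f g by simp
  finally show ?thesis .
qed

section \<open>First moments and the Wasserstein distance\<close>

lemma M1N_lipschitz_integral_bound:
  fixes f :: "'a::euclidean_space \<Rightarrow> real"
  assumes \<mu>: "\<mu> \<in> M1N N" and f: "1-lipschitz_on UNIV f"
  shows "\<bar>(\<integral>y. f y \<partial>\<mu>) - measure \<mu> UNIV * f 0\<bar> \<le> (\<integral>y. norm y \<partial>\<mu>)"
proof -
  have sets: "sets \<mu> = sets borel" and norm: "integrable \<mu> norm"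
    and "emeasure \<mu> UNIV = ennreal N" using \<mu> by (auto simp: M1N_def)
  have space: "space \<mu> = UNIV" using sets_eq_imp_space_eq[OF sets] by simp
  interpret finite_measure \<mu>
    using \<open>emeasure \<mu> UNIV = ennreal N\<close> by (intro finite_measureI) (simp add: space)
  have f_le: "\<bar>f y - f 0\<bar> \<le> norm y" for y
    using lipschitz_onD[OF f, of y 0] by (simp add: dist_real_def)
  have "f \<in> borel_measurable \<mu>"
    using borel_measurable_lipschitz[OF f] measurable_cong_sets[OF sets refl] by blast
  then have i0: "integrable \<mu> (\<lambda>y. f y - f 0)"
    by (intro Bochner_Integration.integrable_bound[OF norm]) (auto simp: f_le)
  then have "integrable \<mu> (\<lambda>y. (f y - f 0) + f 0)"
    by (rule Bochner_Integration.integrable_add) simp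
  then have i: "integrable \<mu> f" by simp
  have "\<bar>(\<integral>y. f y \<partial>\<mu>) - measure \<mu> UNIV * f 0\<bar> = \<bar>\<integral>y. f y - f 0 \<partial>\<mu>\<bar>"
    using i by (simp add: space)
  also have "\<dots> \<le> (\<integral>y. \<bar>f y - f 0\<bar> \<partial>\<mu>)"
    using integral_norm_bound[of \<mu> "\<lambda>y. f y - f 0"] by simp
  also have "\<dots> \<le> (\<integral>y. norm y \<partial>\<mu>)"
    using i0 norm f_le by (intro integral_mono) auto
  finally show ?thesis .
qed

lemma integral_diff_le_W1:
  fixes f :: "'a::euclidean_space \<Rightarrow> real"
  assumes \<mu>: "\<mu> \<in> M1N N" and \<nu>: "\<nu> \<in> M1N N" and f: "1-lipschitz_on UNIV f"
  shows "(\<integral>y. f y \<partial>\<mu>) - (\<integral>y. f y \<partial>\<nu>) \<le> W1 \<mu> \<nu>"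
proof -
  have mass: "measure \<mu> UNIV = measure \<nu> UNIV"
    using \<mu> \<nu> by (simp add: M1N_def measure_def)
  have "bdd_above ((\<lambda>g. (\<integral>y. g y \<partial>\<mu>) - (\<integral>y. g y \<partial>\<nu>)) ` {g :: 'a \<Rightarrow> real. 1-lipschitz_on UNIV g})"
  proof (rule bdd_aboveI2)
    fix g :: "'a \<Rightarrow> real" assume "g \<in> {g. 1-lipschitz_on UNIV g}"
    then have g: "1-lipschitz_on UNIV g" by simp
    show "(\<integral>y. g y \<partial>\<mu>) - (\<integral>y. g y \<partial>\<nu>) \<le> (\<integral>y. norm y \<partial>\<mu>) + (\<integral>y. norm y \<partial>\<nu>)"
      using M1N_lipschitz_integral_bound[OF \<mu> g, unfolded mass] M1N_lipschitz_integral_bound[OF \<nu> g]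
      unfolding abs_le_iff by linarith
  qed
  then show ?thesis unfolding W1_def using f by (intro cSUP_upper) auto
qed

lemma first_moment_diff_le_W1:
  assumes "\<mu> \<in> M1N N" and "\<nu> \<in> M1N N"
  shows "\<bar>(\<integral>y. norm y \<partial>\<mu>) - (\<integral>y. norm y \<partial>\<nu>)\<bar> \<le> W1 \<mu> \<nu>"
proof -
  have norm: "1-lipschitz_on UNIV (\<lambda>y::'a. norm y)"
    by (rule lipschitz_onI) (auto simp: dist_norm dist_real_def norm_triangle_ineq3)
  then have "1-lipschitz_on UNIV (\<lambda>y::'a. - norm y)" by simp
  then show ?thesis
    using integral_diff_le_W1[OF assms norm] integral_diff_le_W1[OF assms]
    unfolding abs_le_iff by fastforce
qed

lemma is_solutionD:
  assumes "is_solution N T v mubar \<mu> \<gamma>"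
  shows "mubar \<in> M1N N" and "\<And>t. t \<in> {0..T} \<Longrightarrow> \<mu> t \<in> M1N N"
    and "\<forall>t\<in>{0..T}. \<forall>\<epsilon>>0. \<exists>\<delta>>0. \<forall>s\<in>{0..T}. \<bar>s - t\<bar> < \<delta> \<longrightarrow> W1 (\<mu> s) (\<mu> t) < \<epsilon>"
    and "\<And>t. t \<in> {0..T} \<Longrightarrow> \<gamma> t \<in> borel_measurable borel"
    and "\<And>t. t \<in> {0..T} \<Longrightarrow> \<mu> t = pushfwd (\<gamma> t) mubar"
    and "\<And>t x. t \<in> {0..T} \<Longrightarrow> ((\<lambda>s. v (\<mu> s) (\<gamma> s x)) has_integral (\<gamma> t x - x)) {0..t}"
  using assms unfolding is_solution_def by blast+

lemma is_solution_first_moment_bounded: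
  assumes "is_solution N T v mubar \<mu> \<gamma>"
  shows "bdd_above ((\<lambda>t. \<integral>y. norm y \<partial>\<mu> t) ` {0..T})"
proof -
  note M = is_solutionD(2)[OF assms] and W = is_solutionD(3)[OF assms]
  have "continuous_on {0..T} (\<lambda>t. \<integral>y. norm y \<partial>\<mu> t)"
    unfolding continuous_on_iff
  proof (intro ballI allI impI)
    fix t \<epsilon> :: real assume t: "t \<in> {0..T}" and "\<epsilon> > 0"
    then obtain \<delta> where "\<delta> > 0" and \<delta>: "\<forall>s\<in>{0..T}. \<bar>s - t\<bar> < \<delta> \<longrightarrow> W1 (\<mu> s) (\<mu> t) < \<epsilon>"
      using W by blast
    have "dist (\<integral>y. norm y \<partial>\<mu> s) (\<integral>y. norm y \<partial>\<mu> t) < \<epsilon>"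
      if "s \<in> {0..T}" "dist s t < \<delta>" for s
    proof -
      have "W1 (\<mu> s) (\<mu> t) < \<epsilon>" using \<delta> that by (simp add: dist_real_def)
      then show ?thesis
        using first_moment_diff_le_W1[OF M[OF that(1)] M[OF t]] by (simp add: dist_real_def)
    qed
    with \<open>\<delta> > 0\<close> show "\<exists>\<delta>>0. \<forall>s\<in>{0..T}. dist s t < \<delta> \<longrightarrow>
        dist (\<integral>y. norm y \<partial>\<mu> s) (\<integral>y. norm y \<partial>\<mu> t) < \<epsilon>"
      by blast
  qed
  then have "compact ((\<lambda>t. \<integral>y. norm y \<partial>\<mu> t) ` {0..T})"
    using compact_Icc by (rule compact_continuous_image)
  then show ?thesis by (rule bounded_imp_bdd_above[OF compact_imp_bounded])
qed

section \<open>Lagrangian flows and their uniqueness\<close>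

text \<open>Flow maps in Lagrangian form, relative to a fixed reference measure \<open>M\<close>: the particle labelled
  \<open>z\<close> starts at \<open>x0 z\<close> and moves with the interaction field of the current law
  \<open>distr M borel (\<gamma> t)\<close>. The first-moment bound is what makes the \<open>L\<^sup>1(M)\<close>-distance of two flows
  a bounded function of time.\<close>
definition lagrangian_flow ::
  "'a measure \<Rightarrow> ('a::euclidean_space \<Rightarrow> 'a) \<Rightarrow> ('a \<Rightarrow> 'a) \<Rightarrow> real \<Rightarrow> (real \<Rightarrow> 'a \<Rightarrow> 'a) \<Rightarrow> bool"
  where "lagrangian_flow M K x0 T \<gamma> \<longleftrightarrow>
    (\<forall>t\<in>{0..T}. integrable M (\<gamma> t)) \<and>
    bdd_above ((\<lambda>t. \<integral>z. norm (\<gamma> t z) \<partial>M) ` {0..T}) \<and>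
    (\<forall>t\<in>{0..T}. \<forall>z. ((\<lambda>s. conv_vel K (distr M borel (\<gamma> s)) (\<gamma> s z)) has_integral (\<gamma> t z - x0 z)) {0..t})"

lemma lagrangian_flowD:
  assumes "lagrangian_flow M K x0 T \<gamma>"
  shows "\<And>t. t \<in> {0..T} \<Longrightarrow> integrable M (\<gamma> t)"
    and "bdd_above ((\<lambda>t. \<integral>z. norm (\<gamma> t z) \<partial>M) ` {0..T})"
    and "\<And>t z. t \<in> {0..T} \<Longrightarrow>
      ((\<lambda>s. conv_vel K (distr M borel (\<gamma> s)) (\<gamma> s z)) has_integral (\<gamma> t z - x0 z)) {0..t}"
  using assms by (auto simp: lagrangian_flow_def)

lemma lagrangian_flow_increment:
  assumes "lagrangian_flow M K x0 T \<gamma>" and "0 \<le> s" "s \<le> t" "t \<le> T"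
  shows "((\<lambda>r. conv_vel K (distr M borel (\<gamma> r)) (\<gamma> r z)) has_integral (\<gamma> t z - \<gamma> s z)) {s..t}"
  by (rule has_integral_increment[where g="\<lambda>t. \<gamma> t z" and c="x0 z" and a=0 and b=T,
        OF lagrangian_flowD(3)[OF assms(1)]]) (use assms(2-4) in auto)

lemma lagrangian_flow_continuous:
  assumes "lagrangian_flow M K x0 T \<gamma>"
  shows "continuous_on {0..T} (\<lambda>t. \<gamma> t z)"
  by (rule continuous_on_has_integral_increment[where c="x0 z", OF lagrangian_flowD(3)[OF assms]])

lemma lagrangian_flow_initial:
  assumes "lagrangian_flow M K x0 T \<gamma>" and "0 \<le> T"
  shows "\<gamma> 0 = x0"
proof
  fix z
  have "((\<lambda>s. conv_vel K (distr M borel (\<gamma> s)) (\<gamma> s z)) has_integral (\<gamma> 0 z - x0 z)) {0}"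
    using lagrangian_flowD(3)[OF assms(1), of 0 z] assms(2) by simp
  then show "\<gamma> 0 z = x0 z" using has_integral_unique[OF _ has_integral_refl(2)] by fastforce
qed

lemma lagrangian_flows_integral_dist_bounded:
  assumes P: "lagrangian_flow M K x0 T P" and Q: "lagrangian_flow M K x0 T Q"
  shows "bdd_above ((\<lambda>t. \<integral>z. norm (P t z - Q t z) \<partial>M) ` {0..T})"
proof -
  obtain BP where BP: "\<forall>t\<in>{0..T}. (\<integral>z. norm (P t z) \<partial>M) \<le> BP"
    using lagrangian_flowD(2)[OF P] by (auto simp: bdd_above_def)
  obtain BQ where BQ: "\<forall>t\<in>{0..T}. (\<integral>z. norm (Q t z) \<partial>M) \<le> BQ"
    using lagrangian_flowD(2)[OF Q] by (auto simp: bdd_above_def)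
  show ?thesis
  proof (rule bdd_aboveI2)
    fix t assume t: "t \<in> {0..T}"
    have iP: "integrable M (P t)" and iQ: "integrable M (Q t)"
      using lagrangian_flowD(1) P Q t by blast+
    have "(\<integral>z. norm (P t z - Q t z) \<partial>M) \<le> (\<integral>z. norm (P t z) + norm (Q t z) \<partial>M)"
      using iP iQ by (intro integral_mono) (auto simp: norm_triangle_ineq4)
    also have "\<dots> = (\<integral>z. norm (P t z) \<partial>M) + (\<integral>z. norm (Q t z) \<partial>M)"
      using iP iQ by simp
    finally show "(\<integral>z. norm (P t z - Q t z) \<partial>M) \<le> BP + BQ"
      using BP t BQ by fastforce
  qed
qed

lemma lagrangian_flows_dist_le_on_short_interval:
  fixes K :: "'a::euclidean_space \<Rightarrow> 'a"
  assumes M: "finite_measure M" and K: "C-lipschitz_on UNIV K"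
    and P: "lagrangian_flow M K x0 T P" and Q: "lagrangian_flow M K x0 T Q"
    and t01: "0 \<le> t0" "t1 \<le> T"
    and short: "(t1 - t0) * (C * measure M (space M)) \<le> 1/4"
    and eq: "P t0 = Q t0"
    and A: "\<forall>r\<in>{t0..t1}. (\<integral>z. norm (P r z - Q r z) \<partial>M) \<le> A" "0 \<le> A"
    and r: "r \<in> {t0..t1}"
  shows "norm (P r z - Q r z) \<le> 2 * (C * A) * (t1 - t0)"
proof -
  define N where "N = measure M (space M)"
  define V where "V \<gamma> r = conv_vel K (distr M borel (\<gamma> r)) (\<gamma> r z)" for \<gamma> :: "real \<Rightarrow> 'a \<Rightarrow> 'a" and r
  have C: "0 \<le> C" and N: "0 \<le> N" using lipschitz_on_nonneg[OF K] by (auto simp: N_def)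
  have sub: "{t0..t1} \<subseteq> {0..T}" using t01 by auto
  show ?thesis
  proof (rule norm_le_if_has_integral_on_short_interval[where w="\<lambda>r. V P r - V Q r", OF _ _ _ _ _ _ r])
    show "continuous_on {t0..t1} (\<lambda>r. P r z - Q r z)"
      using lagrangian_flow_continuous[OF P] lagrangian_flow_continuous[OF Q]
      by (intro continuous_intros continuous_on_subset[OF _ sub])
    show "((\<lambda>r. V P r - V Q r) has_integral (P t z - Q t z)) {t0..t}" if "t \<in> {t0..t1}" for t
    proof -
      have "((\<lambda>r. V P r - V Q r) has_integral (P t z - P t0 z) - (Q t z - Q t0 z)) {t0..t}"
        unfolding V_def using that t01
        by (intro has_integral_diff lagrangian_flow_increment[OF P] lagrangian_flow_increment[OF Q]) auto
      then show ?thesis using eq by simp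
    qed
    show "norm (V P r - V Q r) \<le> C * A + C * N * norm (P r z - Q r z)" if "r \<in> {t0..t1}" for r
    proof -
      have "r \<in> {0..T}" using that sub by auto
      then have "norm (V P r - V Q r) \<le> C * (\<integral>z. norm (P r z - Q r z) \<partial>M) + C * N * norm (P r z - Q r z)"
        unfolding V_def N_def
        by (intro finite_measure.norm_conv_vel_distr_diff_le[OF M K])
          (auto intro: lagrangian_flowD(1)[OF P] lagrangian_flowD(1)[OF Q])
      also have "\<dots> \<le> C * A + C * N * norm (P r z - Q r z)"
        using A that C by (simp add: mult_left_mono)
      finally show ?thesis .
    qed
    show "(t1 - t0) * (C * N) \<le> 1/4" using short by (simp add: N_def)
  qed (use A C N in auto)
qed

lemma lagrangian_flows_agree_on_short_interval:
  fixes K :: "'a::euclidean_space \<Rightarrow> 'a"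
  assumes M: "finite_measure M" and K: "C-lipschitz_on UNIV K"
    and P: "lagrangian_flow M K x0 T P" and Q: "lagrangian_flow M K x0 T Q"
    and t01: "0 \<le> t0" "t0 \<le> t1" "t1 \<le> T"
    and short: "(t1 - t0) * (C * measure M (space M)) \<le> 1/4"
    and eq: "P t0 = Q t0"
  shows "\<forall>t\<in>{t0..t1}. P t = Q t"
proof -
  interpret finite_measure M by (rule M)
  define E where "E r = (\<integral>z. norm (P r z - Q r z) \<partial>M)" for r
  define A where "A = Sup (E ` {t0..t1})"
  have sub: "{t0..t1} \<subseteq> {0..T}" using t01 by auto
  have "bdd_above (E ` {t0..t1})"
    using bdd_above_mono[OF lagrangian_flows_integral_dist_bounded[OF P Q] image_mono[OF sub]]
    by (simp add: E_def)
  then have E_le_A: "\<forall>r\<in>{t0..t1}. E r \<le> A"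
    unfolding A_def by (auto intro: cSUP_upper2)
  have "0 \<le> E t0" unfolding E_def by (rule integral_nonneg_AE) simp
  moreover have "E t0 \<le> A" using E_le_A t01 by simp
  ultimately have A: "0 \<le> A" by linarith
  note pointwise = lagrangian_flows_dist_le_on_short_interval[OF M K P Q t01(1,3) short eq
      E_le_A[unfolded E_def] A]
  have "E r \<le> A / 2" if "r \<in> {t0..t1}" for r
  proof -
    have "r \<in> {0..T}" using that sub by auto
    then have "integrable M (\<lambda>z. norm (P r z - Q r z))"
      using lagrangian_flowD(1)[OF P] lagrangian_flowD(1)[OF Q] by auto
    then have "E r \<le> (\<integral>z. 2 * (C * A) * (t1 - t0) \<partial>M)"
      unfolding E_def using pointwise[OF that] by (intro integral_mono) auto
    also have "\<dots> = 2 * A * ((t1 - t0) * (C * measure M (space M)))" by simp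
    also have "\<dots> \<le> 2 * A * (1/4)" using short A by (intro mult_left_mono) auto
    finally show ?thesis by simp
  qed
  then have "A \<le> A / 2" unfolding A_def using t01 by (intro cSUP_least) auto
  then have "A = 0" using A by simp
  then show ?thesis using pointwise t01 by auto
qed

lemma lagrangian_flow_unique:
  fixes K :: "'a::euclidean_space \<Rightarrow> 'a"
  assumes M: "finite_measure M" and K: "C-lipschitz_on UNIV K"
    and P: "lagrangian_flow M K x0 T P" and Q: "lagrangian_flow M K x0 T Q"
  shows "\<forall>t\<in>{0..T}. P t = Q t"
proof (cases "0 \<le> T")
  case True
  define L where "L = C * measure M (space M)"
  have L: "0 \<le> L" using lipschitz_on_nonneg[OF K] by (simp add: L_def)
  define h where "h = 1 / (4 * (L + 1))"
  have "h > 0" using L by (simp add: h_def)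
  have hL: "h * L \<le> 1/4" using L by (simp add: h_def field_simps)
  show ?thesis
  proof (rule continuation_by_steps[OF \<open>h > 0\<close>])
    show "P 0 = Q 0" using lagrangian_flow_initial[OF P True] lagrangian_flow_initial[OF Q True] by simp
    fix t0 t1 assume t01: "0 \<le> t0" "t0 \<le> t1" "t1 \<le> T" "t1 - t0 \<le> h" and "P t0 = Q t0"
    have "(t1 - t0) * L \<le> 1/4" using mult_right_mono[OF t01(4) L] hL by linarith
    then show "\<forall>s\<in>{t0..t1}. P s = Q s"
      using lagrangian_flows_agree_on_short_interval[OF M K P Q t01(1-3)] \<open>P t0 = Q t0\<close>
      by (simp add: L_def)
  qed
qed simp

section \<open>Solutions as Lagrangian flows and rescaling\<close>

lemma is_solution_imp_lagrangian_flow: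
  assumes sol: "is_solution N T (conv_vel K) mubar \<mu> \<gamma>"
  shows "lagrangian_flow mubar K (\<lambda>x. x) T \<gamma>"
proof -
  have sets: "sets mubar = sets borel" using is_solutionD(1)[OF sol] by (simp add: M1N_def)
  have meas: "\<gamma> t \<in> borel_measurable mubar" if "t \<in> {0..T}" for t
    using is_solutionD(4)[OF sol that] measurable_cong_sets[OF sets refl] by blast
  have distr: "\<mu> t = distr mubar borel (\<gamma> t)" if "t \<in> {0..T}" for t
    using is_solutionD(5)[OF sol that] by (simp add: pushfwd_def)
  have moment: "(\<integral>z. norm (\<gamma> t z) \<partial>mubar) = (\<integral>y. norm y \<partial>\<mu> t)" if t: "t \<in> {0..T}" for t
    by (simp add: distr[OF t] integral_distr[OF meas[OF t]])
  have int: "integrable mubar (\<gamma> t)" if t: "t \<in> {0..T}" for t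
  proof -
    have "integrable (\<mu> t) norm" using is_solutionD(2)[OF sol t] by (simp add: M1N_def)
    then have "integrable mubar (\<lambda>z. norm (\<gamma> t z))"
      by (simp add: distr[OF t] integrable_distr_eq[OF meas[OF t]])
    then show ?thesis using integrable_norm_iff[OF meas[OF t]] by simp
  qed
  have "(\<lambda>t. \<integral>z. norm (\<gamma> t z) \<partial>mubar) ` {0..T} = (\<lambda>t. \<integral>y. norm y \<partial>\<mu> t) ` {0..T}"
    by (rule image_cong) (simp_all add: moment)
  then have "bdd_above ((\<lambda>t. \<integral>z. norm (\<gamma> t z) \<partial>mubar) ` {0..T})"
    using is_solution_first_moment_bounded[OF sol] by simp
  moreover have "((\<lambda>s. conv_vel K (distr mubar borel (\<gamma> s)) (\<gamma> s z)) has_integral (\<gamma> t z - z)) {0..t}"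
    if t: "t \<in> {0..T}" for t z
    using is_solutionD(6)[OF sol t, of z] t
    by (subst has_integral_cong[where g="\<lambda>s. conv_vel K (\<mu> s) (\<gamma> s z)"]) (auto simp: distr)
  ultimately show ?thesis using int unfolding lagrangian_flow_def by blast
qed

lemma lagrangian_flow_distr:
  assumes flow: "lagrangian_flow (distr M borel U) K x0 T \<gamma>" and U: "U \<in> borel_measurable M"
  shows "lagrangian_flow M K (\<lambda>z. x0 (U z)) T (\<lambda>t z. \<gamma> t (U z))"
proof -
  have meas: "\<gamma> t \<in> borel_measurable borel" if "t \<in> {0..T}" for t
    using borel_measurable_integrable[OF lagrangian_flowD(1)[OF flow that]]
    unfolding measurable_cong_sets[OF sets_distr refl] .
  have distr: "distr (distr M borel U) borel (\<gamma> t) = distr M borel (\<lambda>z. \<gamma> t (U z))"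
    if "t \<in> {0..T}" for t
    using distr_distr[OF meas[OF that] U] by (simp add: comp_def)
  have int: "integrable M (\<lambda>z. \<gamma> t (U z))" if "t \<in> {0..T}" for t
    using lagrangian_flowD(1)[OF flow that] integrable_distr_eq[OF U meas[OF that]] by simp
  have "(\<lambda>t. \<integral>z. norm (\<gamma> t (U z)) \<partial>M) ` {0..T}
      = (\<lambda>t. \<integral>z. norm (\<gamma> t z) \<partial>distr M borel U) ` {0..T}"
  proof (rule image_cong[OF refl])
    fix t assume "t \<in> {0..T}"
    from integral_distr[OF U measurable_compose[OF meas[OF this] borel_measurable_norm]]
    show "(\<integral>z. norm (\<gamma> t (U z)) \<partial>M) = (\<integral>z. norm (\<gamma> t z) \<partial>distr M borel U)" by simp
  qed
  then have "bdd_above ((\<lambda>t. \<integral>z. norm (\<gamma> t (U z)) \<partial>M) ` {0..T})"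
    using lagrangian_flowD(2)[OF flow] by simp
  moreover have "((\<lambda>s. conv_vel K (distr M borel (\<lambda>z. \<gamma> s (U z))) (\<gamma> s (U z')))
      has_integral (\<gamma> t (U z') - x0 (U z'))) {0..t}" if t: "t \<in> {0..T}" for t z'
  proof (subst has_integral_cong)
    fix s assume "s \<in> {0..t}"
    then have "s \<in> {0..T}" using t by auto
    then show "conv_vel K (distr M borel (\<lambda>z. \<gamma> s (U z))) (\<gamma> s (U z'))
        = conv_vel K (distr (distr M borel U) borel (\<gamma> s)) (\<gamma> s (U z'))"
      by (simp add: distr)
  qed (rule lagrangian_flowD(3)[OF flow t])
  ultimately show ?thesis using int unfolding lagrangian_flow_def by blast
qed

lemma lagrangian_flow_scaleR:
  fixes K :: "'a::euclidean_space \<Rightarrow> 'a"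
  assumes flow: "lagrangian_flow M (\<lambda>z. (1 / a) *\<^sub>R K z) x0 T \<gamma>"
    and a: "a \<noteq> 0" and K: "K \<in> borel_measurable borel"
  shows "lagrangian_flow M (\<lambda>z. K (z /\<^sub>R a)) (\<lambda>z. a *\<^sub>R x0 z) T (\<lambda>t z. a *\<^sub>R \<gamma> t z)"
proof -
  have vel: "conv_vel (\<lambda>z. K (z /\<^sub>R a)) (distr M borel (\<lambda>y. a *\<^sub>R \<gamma> s y)) (a *\<^sub>R x)
      = a *\<^sub>R conv_vel (\<lambda>z. (1 / a) *\<^sub>R K z) (distr M borel (\<gamma> s)) x" if "s \<in> {0..T}" for s x
  proof -
    have "\<gamma> s \<in> borel_measurable M"
      using lagrangian_flowD(1)[OF flow that] by (rule borel_measurable_integrable)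
    then have "pushfwd (\<lambda>z. a *\<^sub>R z) (distr M borel (\<gamma> s)) = distr M borel (\<lambda>y. a *\<^sub>R \<gamma> s y)"
      unfolding pushfwd_def by (subst distr_distr) (auto simp: comp_def)
    then show ?thesis using conv_vel_rescale[OF sets_distr a K, of M "\<gamma> s" x] a by simp
  qed
  have int: "integrable M (\<lambda>z. a *\<^sub>R \<gamma> t z)" if "t \<in> {0..T}" for t
    using lagrangian_flowD(1)[OF flow that] by simp
  obtain B where B: "\<forall>t\<in>{0..T}. (\<integral>z. norm (\<gamma> t z) \<partial>M) \<le> B"
    using lagrangian_flowD(2)[OF flow] by (auto simp: bdd_above_def)
  have bdd: "bdd_above ((\<lambda>t. \<integral>z. norm (a *\<^sub>R \<gamma> t z) \<partial>M) ` {0..T})"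
  proof (rule bdd_aboveI2)
    fix t assume "t \<in> {0..T}"
    then show "(\<integral>z. norm (a *\<^sub>R \<gamma> t z) \<partial>M) \<le> \<bar>a\<bar> * B"
      using B by (simp add: mult_left_mono)
  qed
  have "((\<lambda>s. conv_vel (\<lambda>z. K (z /\<^sub>R a)) (distr M borel (\<lambda>y. a *\<^sub>R \<gamma> s y)) (a *\<^sub>R \<gamma> s z))
      has_integral (a *\<^sub>R \<gamma> t z - a *\<^sub>R x0 z)) {0..t}" if t: "t \<in> {0..T}" for t z
  proof -
    have "((\<lambda>s. a *\<^sub>R conv_vel (\<lambda>z. (1 / a) *\<^sub>R K z) (distr M borel (\<gamma> s)) (\<gamma> s z))
        has_integral (a *\<^sub>R \<gamma> t z - a *\<^sub>R x0 z)) {0..t}"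
      using has_integral_cmul[OF lagrangian_flowD(3)[OF flow t, of z], of a]
      by (simp add: scaleR_diff_right)
    moreover have "s \<in> {0..T}" if "s \<in> {0..t}" for s using that t by auto
    ultimately show ?thesis by (subst has_integral_cong[OF vel]) auto
  qed
  with int bdd show ?thesis unfolding lagrangian_flow_def by blast
qed

lemma is_solution_rescaled_flow_conj:
  fixes K :: "'a::euclidean_space \<Rightarrow> 'a"
  assumes a: "a \<noteq> 0" and K: "C-lipschitz_on UNIV K"
    and hat: "is_solution N T (conv_vel (\<lambda>z. K (z /\<^sub>R a))) (pushfwd (\<lambda>z. a *\<^sub>R z) mubar) muhat gammahat"
    and til: "is_solution N T (conv_vel (\<lambda>z. (1 / a) *\<^sub>R K z)) mubar mutil gammatil"
    and t: "t \<in> {0..T}"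
  shows "gammahat t \<circ> (\<lambda>z. a *\<^sub>R z) = (\<lambda>z. a *\<^sub>R z) \<circ> gammatil t"
proof -
  define U where "U = (\<lambda>z::'a. a *\<^sub>R z)"
  have Kb: "K \<in> borel_measurable borel" by (rule borel_measurable_lipschitz[OF K])
  have "mubar \<in> M1N N" by (rule is_solutionD(1)[OF til])
  then have sets: "sets mubar = sets borel" and "emeasure mubar (space mubar) = ennreal N"
    using sets_eq_imp_space_eq[of mubar borel] by (auto simp: M1N_def)
  then have fin: "finite_measure mubar" by (intro finite_measureI) simp
  have "U \<in> borel_measurable mubar"
    unfolding measurable_cong_sets[OF sets refl] U_def by simp
  with is_solution_imp_lagrangian_flow[OF hat[folded U_def, unfolded pushfwd_def]]
  have flow_hat: "lagrangian_flow mubar (\<lambda>z. K (z /\<^sub>R a)) U T (\<lambda>t z. gammahat t (U z))"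
    by (rule lagrangian_flow_distr)
  have flow_til: "lagrangian_flow mubar (\<lambda>z. K (z /\<^sub>R a)) U T (\<lambda>t z. U (gammatil t z))"
    using lagrangian_flow_scaleR[OF is_solution_imp_lagrangian_flow[OF til] a Kb] by (simp add: U_def)
  from lagrangian_flow_unique[OF fin lipschitz_on_rescale[OF K a] flow_hat flow_til] t
  show ?thesis unfolding comp_def U_def by blast
qed

theorem mainTheorem6:
  fixes N T a :: real
    and K Khat Ktil U :: "'a::euclidean_space \<Rightarrow> 'a"
    and muhat mutil :: "real \<Rightarrow> 'a measure"
    and gammahat gammatil :: "real \<Rightarrow> 'a \<Rightarrow> 'a"
  assumes "N \<ge> 1" and "T > 0" and "a \<noteq> 0"
    and "U = (\<lambda>z. a *\<^sub>R z)"
    and "\<exists>C. C-lipschitz_on UNIV K"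
    and "Khat = (\<lambda>z. K (z /\<^sub>R a))"
    and "Ktil = (\<lambda>z. (1 / a) *\<^sub>R K z)"
    and "is_solution N T (conv_vel Khat) (muhat 0) muhat gammahat"
    and "is_solution N T (conv_vel Ktil) (mutil 0) mutil gammatil"
    and "muhat 0 = pushfwd U (mutil 0)"
  shows "(\<forall>\<mu>\<in>M1N N. \<forall>x. conv_vel Ktil \<mu> x = (1 / a) *\<^sub>R conv_vel Khat (pushfwd U \<mu>) (a *\<^sub>R x))
       \<and> (\<forall>t\<in>{0<..T}. gammahat t = U \<circ> gammatil t \<circ> inv U)
       \<and> (\<forall>t\<in>{0<..T}. muhat t = pushfwd U (mutil t))"
proof -
  note a = \<open>a \<noteq> 0\<close> and U_def = \<open>U = (\<lambda>z. a *\<^sub>R z)\<close>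
    and Khat_def = \<open>Khat = _\<close> and Ktil_def = \<open>Ktil = _\<close>
    and hat = \<open>is_solution N T (conv_vel Khat) (muhat 0) muhat gammahat\<close>
    and til = \<open>is_solution N T (conv_vel Ktil) (mutil 0) mutil gammatil\<close>
    and init = \<open>muhat 0 = pushfwd U (mutil 0)\<close>
  obtain C where K: "C-lipschitz_on UNIV K" using \<open>\<exists>C. C-lipschitz_on UNIV K\<close> by blast
  have Kb: "K \<in> borel_measurable borel" by (rule borel_measurable_lipschitz[OF K])
  have conj: "gammahat t \<circ> U = U \<circ> gammatil t" if "t \<in> {0..T}" for t
    using is_solution_rescaled_flow_conj[OF a K _ _ that] hat til
    unfolding U_def Khat_def Ktil_def init by blast
  have "U \<circ> inv U = id"
    unfolding U_def using a by (intro surj_iff[THEN iffD1] surjI[of _ "\<lambda>z. z /\<^sub>R a"]) simp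
  then have flows: "gammahat t = U \<circ> gammatil t \<circ> inv U" if "t \<in> {0..T}" for t
    using conj[OF that] by (metis comp_id o_assoc)
  have measures: "muhat t = pushfwd U (mutil t)" if "t \<in> {0..T}" for t
  proof -
    have "muhat t = pushfwd (gammahat t) (pushfwd U (mutil 0))"
      using is_solutionD(5)[OF hat that] init by simp
    also have "\<dots> = pushfwd U (pushfwd (gammatil t) (mutil 0))"
      using is_solutionD(1)[OF til] is_solutionD(4)[OF hat that] is_solutionD(4)[OF til that] conj[OF that]
      by (intro pushfwd_pushfwd_commute) (auto simp: M1N_def U_def)
    also have "\<dots> = pushfwd U (mutil t)"
      using is_solutionD(5)[OF til that] by simp
    finally show ?thesis .
  qed
  have vel: "conv_vel Ktil \<mu> x = (1 / a) *\<^sub>R conv_vel Khat (pushfwd U \<mu>) (a *\<^sub>R x)"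
    if "\<mu> \<in> M1N N" for \<mu> x
    using conv_vel_rescale[OF _ a Kb] that by (simp add: M1N_def U_def Khat_def Ktil_def)
  have "{0<..T} \<subseteq> {0..T}" by auto
  with vel flows measures show ?thesis by blast
qed

end
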